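(* Let $\mathrm{Q}(E)\subset\mathrm{QPH}_0(E)$ be the locus where $\Phi=0$, let $\mathrm{R}(E)$ be the locus where $\Phi\ne 0$ and $L(\Phi)=E_1$ (defined when $m_1>m_2$), and for an integer $j$ let $\mathrm{S}_j(E)$ be the locus where $\Phi\neq0$, $\det\Phi=0$ and $L(\Phi)\ne E_1$ has degree $j$. Then, for every integer $m$, $$\mathrm{QPH}_0(E)=\begin{cases}\mathrm{Q}(E)\sqcup\mathrm{S}_m(E)\sqcup\mathrm{S}_{m-1}(E) & E\cong\mathcal O(m)\oplus\mathcal O(m),\\ \mathrm{Q}(E)\sqcup\mathrm{R}(E)\sqcup\mathrm{S}_m(E) & E\cong\mathcal O(m+1)\oplus\mathcal O(m),\\ \mathrm{Q}(E)\sqcup\mathrm{R}(E)\sqcup\mathrm{S}_{m-1}(E) & E\cong\mathcal O(m+1)\oplus\mathcal O(m-1),\end{cases}$$ and $\mathrm{QPH}_0(E)=\mathrm{Q}(E)\sqcup\mathrm{R}(E)$ if $m_1-m_2\ge 3$.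
   Context: Fix $z_1\in\mathbb{CP}^1\setminus\{0,1,\infty\}$, set $z_2=0$, $z_3=1$, $z_4=\infty$ and $D=z_1+z_2+z_3+z_4$. Let $E\to\mathbb{CP}^1$ be a holomorphic vector bundle of rank 2, $E\cong\mathcal O(m_1)\oplus\mathcal O(m_2)$, $m_1\ge m_2$; when $m_1>m_2$, $E_1\subset E$ is the unique subbundle isomorphic to $\mathcal O(m_1)$. A quasi-parabolic structure on $E$ is a tuple $(F_1,\dots,F_4)$ of lines $F_i\subset E|_{z_i}$. A (strongly) parabolic Higgs field compatible with it is $\Phi\in H^0(\mathbb{CP}^1,\mathrm{End}(E)\otimes K_{\mathbb{CP}^1}(D))$ such that each residue $\mathrm{Res}_{z_i}\Phi$ is nilpotent with $F_i\subset\ker\mathrm{Res}_{z_i}\Phi$. $\mathrm{QPH}(E)$ is the space of all such tuples, and $\mathrm{QPH}_0(E)$ is the subset where $\det\Phi=0$ in $H^0(\mathbb{CP}^1,K^2_{\mathbb{CP}^1}(D))$. A nonzero nilpotent $\Phi$ preserves a unique line subbundle $L(\Phi)\subset E$ (the saturation of $\ker\Phi$). *)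

theory Defs
  imports "HOL-Analysis.Analysis" "HOL-Computational_Algebra.Polynomial"
begin

(* P^1 = C \<union> {\<infinity>}, affine coordinate z on U0 = C, w = 1/z on U\<infinity>.
   E = O(m1) \<oplus> O(m2); a section of O(k) is a polynomial f(z) of degree \<le> k,
   with f\<^sub>\<infinity>(w) = w^k f(1/w).  Fibres of E are identified with C^2 via the
   standard frame on U0 (at z1, 0, 1) and via the frame on U\<infinity> (at \<infinity>).
   A section \<Phi> of End(E) \<otimes> K(D) is written uniquely as
       \<Phi> = A(z) dz / (z (z-1) (z-z1)),
   where A is a 2x2 matrix of polynomials with  deg A_ij \<le> m_i - m_j + 2
   (A_ij = 0 if m_i - m_j + 2 < 0).  We represent \<Phi> by A. *)

type_synonym cvec = "complex^2"
type_synonym cmat = "complex^2^2"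
type_synonym higgs = "complex poly^2^2"
type_synonym qpstruct = "cvec set \<times> cvec set \<times> cvec set \<times> cvec set"

definition wt :: "int \<Rightarrow> int \<Rightarrow> 2 \<Rightarrow> int" where
  "wt m1 m2 i = (if i = 1 then m1 else m2)"

definition is_line :: "cvec set \<Rightarrow> bool" where
  "is_line S \<longleftrightarrow> (\<exists>v. v \<noteq> 0 \<and> S = {c *s v | c. True})"

definition nilpotent_mat :: "cmat \<Rightarrow> bool" where
  "nilpotent_mat M \<longleftrightarrow> (\<exists>k. ((\<lambda>N. M ** N) ^^ k) (mat 1) = 0)"

definition is_higgs_section :: "int \<Rightarrow> int \<Rightarrow> higgs \<Rightarrow> bool" where
  "is_higgs_section m1 m2 A \<longleftrightarrow>
     (\<forall>i j. A$i$j = 0 \<or> int (degree (A$i$j)) \<le> wt m1 m2 i - wt m1 m2 j + 2)"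

definition qD :: "complex \<Rightarrow> complex poly" where
  "qD z1 = [:0, 1:] * [:-1, 1:] * [:-z1, 1:]"

definition res_fin :: "complex \<Rightarrow> higgs \<Rightarrow> complex \<Rightarrow> cmat" where
  "res_fin z1 A p = (\<chi> i j. poly (A$i$j) p / poly (pderiv (qD z1)) p)"

(* residue of \<Phi> at \<infinity> (frame at infinity, coordinate w = 1/z) *)
definition res_inf :: "int \<Rightarrow> int \<Rightarrow> higgs \<Rightarrow> cmat" where
  "res_inf m1 m2 A = (\<chi> i j. - coeff (A$i$j) (nat (wt m1 m2 i - wt m1 m2 j + 2)))"

definition compat :: "cvec set \<Rightarrow> cmat \<Rightarrow> bool" where
  "compat F R \<longleftrightarrow> nilpotent_mat R \<and> F \<subseteq> {v. R *v v = 0}"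

(* z_1 = z1, z_2 = 0, z_3 = 1, z_4 = \<infinity> *)
definition QPH :: "int \<Rightarrow> int \<Rightarrow> complex \<Rightarrow> (qpstruct \<times> higgs) set" where
  "QPH m1 m2 z1 = {((F1, F2, F3, F4), A).
      is_line F1 \<and> is_line F2 \<and> is_line F3 \<and> is_line F4 \<and>
      is_higgs_section m1 m2 A \<and>
      compat F1 (res_fin z1 A z1) \<and> compat F2 (res_fin z1 A 0) \<and>
      compat F3 (res_fin z1 A 1) \<and> compat F4 (res_inf m1 m2 A)}"

(* det \<Phi> = det A \<cdot> dz^2 / q^2, so det \<Phi> = 0 iff det A = 0 *)
definition hdet :: "higgs \<Rightarrow> complex poly" where
  "hdet A = A$1$1 * A$2$2 - A$1$2 * A$2$1"

definition QPH0 :: "int \<Rightarrow> int \<Rightarrow> complex \<Rightarrow> (qpstruct \<times> higgs) set" where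
  "QPH0 m1 m2 z1 = {x \<in> QPH m1 m2 z1. hdet (snd x) = 0}"

(* p gives a (saturated) line subbundle O(j) \<subseteq> E: a nowhere vanishing section
   (including at \<infinity>) of E(-j) = O(m1-j) \<oplus> O(m2-j) *)
definition line_subbundle :: "int \<Rightarrow> int \<Rightarrow> int \<Rightarrow> complex poly^2 \<Rightarrow> bool" where
  "line_subbundle m1 m2 j p \<longleftrightarrow>
     (\<forall>i. p$i = 0 \<or> int (degree (p$i)) \<le> wt m1 m2 i - j) \<and>
     (\<forall>z. \<exists>i. poly (p$i) z \<noteq> 0) \<and>
     (\<exists>i. wt m1 m2 i - j \<ge> 0 \<and> coeff (p$i) (nat (wt m1 m2 i - j)) \<noteq> 0)"

(* L(\<Phi>) is the line subbundle O(j) given by p: p spans the saturation of ker \<Phi> *)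
definition kernel_line :: "int \<Rightarrow> int \<Rightarrow> higgs \<Rightarrow> int \<Rightarrow> complex poly^2 \<Rightarrow> bool" where
  "kernel_line m1 m2 A j p \<longleftrightarrow> line_subbundle m1 m2 j p \<and> A *v p = 0"

definition Qloc :: "int \<Rightarrow> int \<Rightarrow> complex \<Rightarrow> (qpstruct \<times> higgs) set" where
  "Qloc m1 m2 z1 = {x \<in> QPH0 m1 m2 z1. snd x = 0}"

(* L(\<Phi>) = E_1 = O(m1) \<oplus> 0 *)
definition Rloc :: "int \<Rightarrow> int \<Rightarrow> complex \<Rightarrow> (qpstruct \<times> higgs) set" where
  "Rloc m1 m2 z1 = {x \<in> QPH0 m1 m2 z1. snd x \<noteq> 0 \<and>
      (\<exists>j p. kernel_line m1 m2 (snd x) j p \<and> p$2 = 0)}"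

(* deg L(\<Phi>) = j and L(\<Phi>) \<noteq> E_1 (the latter only meaningful when m1 > m2) *)
definition Sloc :: "int \<Rightarrow> int \<Rightarrow> complex \<Rightarrow> int \<Rightarrow> (qpstruct \<times> higgs) set" where
  "Sloc m1 m2 z1 j = {x \<in> QPH0 m1 m2 z1. snd x \<noteq> 0 \<and>
      (\<exists>p. kernel_line m1 m2 (snd x) j p \<and> (m1 > m2 \<longrightarrow> p$2 \<noteq> 0))}"

definition disj_union2 :: "'a set \<Rightarrow> 'a set \<Rightarrow> 'a set \<Rightarrow> bool" where
  "disj_union2 X A B \<longleftrightarrow> X = A \<union> B \<and> A \<inter> B = {}"

definition disj_union3 :: "'a set \<Rightarrow> 'a set \<Rightarrow> 'a set \<Rightarrow> 'a set \<Rightarrow> bool" where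
  "disj_union3 X A B C \<longleftrightarrow> X = A \<union> B \<union> C \<and> A \<inter> B = {} \<and> A \<inter> C = {} \<and> B \<inter> C = {}"

end

theory Submission
  imports Defs "HOL-Computational_Algebra.Polynomial_Factorial"
    "HOL-Computational_Algebra.Field_as_Ring" "HOL-Computational_Algebra.Fundamental_Theorem_Algebra"
begin

(* The residues force tr \<Phi> = 0, because tr A has degree at most 2 and vanishes at the three
   finite points of D.  A trace-free \<Phi> with det \<Phi> = 0 annihilating a primitive vector p of
   polynomials is r \<cdot> p \<cdot> (-p\<^sub>2, p\<^sub>1)\<^sup>T, so L(\<Phi>) is unique, and comparing deg r + 2 deg p\<^sub>i with the
   degree bound on the off-diagonal entry of \<Phi> gives m1 + m2 - 2 \<le> 2 deg L(\<Phi>).  Together with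
   deg L(\<Phi>) \<le> m2 whenever L(\<Phi>) \<noteq> E_1, this leaves only the listed degrees. *)

lemma wt_1 [simp]: "wt m1 m2 1 = m1" and wt_2 [simp]: "wt m1 m2 2 = m2"
  by (simp_all add: wt_def)

lemma index_2_cases:
  fixes i :: 2
  obtains "i = 1" | "i = 2"
  using exhaust_2 by blast

lemma matrix_vector_mult_eq_0_iff_2:
  fixes A :: "'a::comm_ring_1^2^2"
  shows "A *v p = 0 \<longleftrightarrow> A$1$1 * p$1 + A$1$2 * p$2 = 0 \<and> A$2$1 * p$1 + A$2$2 * p$2 = 0"
  by (simp add: vec_eq_iff forall_2 matrix_vector_mult_def sum_2)

section \<open>Nilpotent residues\<close>

lemma det_zero_square_2:
  fixes M :: cmat
  assumes "det M = 0"
  shows "M ** M = (\<chi> i j. (M$1$1 + M$2$2) * M$i$j)"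
  using assms unfolding det_2
  by (auto simp: vec_eq_iff matrix_matrix_mult_def sum_2 forall_2 algebra_simps)

lemma nilpotent_mat_trace_zero:
  fixes M :: cmat
  assumes "nilpotent_mat M"
  shows "M$1$1 + M$2$2 = 0"
proof -
  define t where "t = M$1$1 + M$2$2"
  define pw where "pw n = ((\<lambda>N. M ** N) ^^ n) (mat 1)" for n
  obtain k where k: "pw k = 0" using assms by (auto simp: nilpotent_mat_def pw_def)
  have pw_Suc: "pw (Suc n) = M ** pw n" for n by (simp add: pw_def)
  have "k \<noteq> 0"
  proof
    assume "k = 0"
    with k have "(mat 1 :: cmat) $ 1 $ 1 = 0" by (simp add: pw_def)
    then show False by (simp add: mat_def)
  qed
  then obtain n where n: "k = Suc n" using not0_implies_Suc by blast
  have "det (pw n) = det M ^ n" for n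
    by (induction n) (simp_all add: pw_Suc det_mul pw_def det_I)
  moreover have "det (pw k) = 0" using k by (simp add: det_2)
  ultimately have "det M = 0" using n by auto
  have pw_Suc_eq: "pw (Suc n) = (\<chi> i j. t ^ n * M$i$j)" for n
  proof (induction n)
    case (Suc n)
    have "pw (Suc (Suc n)) = (\<chi> i j. t ^ n * (M ** M)$i$j)" unfolding pw_Suc[of "Suc n"] Suc
      by (auto simp: vec_eq_iff matrix_matrix_mult_def sum_2 algebra_simps)
    then show ?case using det_zero_square_2[OF \<open>det M = 0\<close>] by (simp add: t_def mult_ac)
  qed (simp add: pw_def vec_eq_iff)
  then have "\<forall>i j. t ^ n * M$i$j = 0" using k n by (simp add: vec_eq_iff)
  then show ?thesis by (cases "t = 0") (simp_all add: t_def)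
qed

lemma poly_pderiv_qD: "poly (pderiv (qD z1)) x = 3 * x^2 - 2 * (1 + z1) * x + z1"
  by (simp add: qD_def pderiv_mult pderiv_pCons algebra_simps power2_eq_square)

lemma QPH_trace_zero:
  assumes "((F1, F2, F3, F4), A) \<in> QPH m1 m2 z1" "z1 \<noteq> 0" "z1 \<noteq> 1"
  shows "A$1$1 + A$2$2 = 0"
proof -
  define t where "t = A$1$1 + A$2$2"
  have root: "poly t p = 0" if "compat F (res_fin z1 A p)" "poly (pderiv (qD z1)) p \<noteq> 0" for F p
  proof -
    have "(res_fin z1 A p)$1$1 + (res_fin z1 A p)$2$2 = 0"
      using that(1) nilpotent_mat_trace_zero compat_def by blast
    then show ?thesis using that(2) by (simp add: res_fin_def t_def add_divide_distrib [symmetric])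
  qed
  have c: "compat F1 (res_fin z1 A z1)" "compat F2 (res_fin z1 A 0)" "compat F3 (res_fin z1 A 1)"
    and hs: "is_higgs_section m1 m2 A"
    using assms(1) by (simp_all add: QPH_def)
  have "poly t z1 = 0"
    using root[OF c(1)] assms(2,3) by (simp add: poly_pderiv_qD power2_eq_square algebra_simps)
  moreover have "poly t 0 = 0" using root[OF c(2)] assms(2) by (simp add: poly_pderiv_qD)
  moreover have "poly t 1 = 0" using root[OF c(3)] assms(3) by (simp add: poly_pderiv_qD)
  ultimately have roots: "poly t x = 0" if "x \<in> {z1, 0, 1}" for x using that by blast
  have diag: "A$i$i = 0 \<or> int (degree (A$i$i)) \<le> wt m1 m2 i - wt m1 m2 i + 2" for i
    using hs unfolding is_higgs_section_def by blast
  have "degree (A$i$i) \<le> 2" for i using diag[of i] by (cases "A$i$i = 0") auto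
  then have "degree t \<le> 2" unfolding t_def by (meson degree_add_le)
  with roots have "t = 0" using assms(2,3) by (intro poly_eqI_degree[of "{z1, 0, 1}"]) auto
  then show ?thesis by (simp add: t_def)
qed

lemma QPH0_higgs_field:
  assumes "x \<in> QPH0 m1 m2 z1" "z1 \<noteq> 0" "z1 \<noteq> 1"
  shows "is_higgs_section m1 m2 (snd x)" "(snd x)$1$1 + (snd x)$2$2 = 0" "hdet (snd x) = 0"
proof -
  obtain F A where x: "x = (F, A)" by fastforce
  obtain F1 F2 F3 F4 where "F = (F1, F2, F3, F4)" by (metis prod.collapse)
  with x assms(1) have "((F1, F2, F3, F4), A) \<in> QPH m1 m2 z1" "hdet A = 0"
    by (simp_all add: QPH0_def)
  with x QPH_trace_zero[OF _ assms(2,3)] show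
    "is_higgs_section m1 m2 (snd x)" "(snd x)$1$1 + (snd x)$2$2 = 0" "hdet (snd x) = 0"
    by (auto simp: QPH_def)
qed

section \<open>Primitive vectors and line subbundles\<close>

definition unimodular :: "'a::comm_ring_1^2 \<Rightarrow> bool" where
  "unimodular p \<longleftrightarrow> (\<exists>u v. u * p$1 + v * p$2 = 1)"

lemma unimodular_nonzero: "unimodular p \<Longrightarrow> p$1 \<noteq> 0 \<or> p$2 \<noteq> 0"
  by (auto simp: unimodular_def)

lemma unimodular_iff_no_common_root:
  fixes p :: "complex poly^2"
  shows "unimodular p \<longleftrightarrow> (\<forall>z. \<exists>i. poly (p$i) z \<noteq> 0)"
proof
  assume "unimodular p"
  then obtain u v where "u * p$1 + v * p$2 = 1" by (auto simp: unimodular_def)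
  then have "poly u z * poly (p$1) z + poly v z * poly (p$2) z = 1" for z
    by (metis poly_1 poly_add poly_mult)
  then have "poly (p$1) z \<noteq> 0 \<or> poly (p$2) z \<noteq> 0" for z by (metis mult_zero_right add_0 zero_neq_one)
  then show "\<forall>z. \<exists>i. poly (p$i) z \<noteq> 0" by blast
next
  assume roots: "\<forall>z. \<exists>i. poly (p$i) z \<noteq> 0"
  define g where "g = gcd (p$1) (p$2)"
  have "poly g z \<noteq> 0" for z
  proof
    assume "poly g z = 0"
    obtain i where "poly (p$i) z \<noteq> 0" using roots by blast
    moreover have "g dvd p$i" by (cases i rule: index_2_cases) (simp_all add: g_def)
    ultimately show False using \<open>poly g z = 0\<close> by (auto elim!: dvdE)
  qed
  then obtain c where "c \<noteq> 0" "g = [:c:]"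
    using fundamental_theorem_of_algebra_alt by blast
  then have "is_unit g" by (simp add: is_unit_triv)
  then have "gcd (p$1) (p$2) = 1" by (simp add: g_def)
  then show "unimodular p" unfolding unimodular_def by (metis bezout_coefficients_fst_snd)
qed

lemma line_subbundle_unimodular: "line_subbundle m1 m2 j p \<Longrightarrow> unimodular p"
  by (simp add: line_subbundle_def unimodular_iff_no_common_root)

lemma line_subbundle_degree_le:
  "line_subbundle m1 m2 j p \<Longrightarrow> p$i \<noteq> 0 \<Longrightarrow> int (degree (p$i)) \<le> wt m1 m2 i - j"
  by (auto simp: line_subbundle_def)

lemma line_subbundle_degree_attained:
  assumes "line_subbundle m1 m2 j p"
  obtains i where "p$i \<noteq> 0" "int (degree (p$i)) = wt m1 m2 i - j"
proof -
  obtain i where i: "wt m1 m2 i - j \<ge> 0" "coeff (p$i) (nat (wt m1 m2 i - j)) \<noteq> 0"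
    using assms unfolding line_subbundle_def by blast
  then have "p$i \<noteq> 0" and "nat (wt m1 m2 i - j) \<le> degree (p$i)" using le_degree by auto
  with i(1) line_subbundle_degree_le[OF assms] show thesis by (intro that) force+
qed

(* The degree of the line subbundle spanned by p is the least wt i - deg p\<^sub>i over p\<^sub>i \<noteq> 0. *)

lemma unimodular_line_subbundle:
  fixes p :: "complex poly^2"
  assumes "unimodular p"
  obtains j where "line_subbundle m1 m2 j p"
proof -
  define f where "f i = wt m1 m2 i - int (degree (p$i))" for i
  have "{i. p$i \<noteq> 0} \<noteq> {}" using unimodular_nonzero[OF assms] by blast
  then obtain i0 where "is_arg_min f (\<lambda>i. i \<in> {i. p$i \<noteq> 0}) i0"
    using ex_is_arg_min_if_finite[OF finite, of "{i. p$i \<noteq> 0}" f] by blast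
  then have i0: "p$i0 \<noteq> 0" "\<And>i. p$i \<noteq> 0 \<Longrightarrow> f i0 \<le> f i" by (auto simp: is_arg_min_linorder)
  have "line_subbundle m1 m2 (f i0) p"
    unfolding line_subbundle_def
  proof (intro conjI)
    show "\<forall>i. p$i = 0 \<or> int (degree (p$i)) \<le> wt m1 m2 i - f i0"
      using i0(2) by (force simp: f_def)
    show "\<forall>z. \<exists>i. poly (p$i) z \<noteq> 0" using assms unimodular_iff_no_common_root by blast
    show "\<exists>i. 0 \<le> wt m1 m2 i - f i0 \<and> coeff (p$i) (nat (wt m1 m2 i - f i0)) \<noteq> 0"
      using i0(1) by (intro exI[of _ i0]) (simp add: f_def)
  qed
  then show thesis by (rule that)
qed

lemma line_subbundle_unit_multiple_degree:
  fixes p :: "complex poly^2"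
  assumes "line_subbundle m1 m2 j p" "line_subbundle m1 m2 j' (c *s p)" "c dvd 1"
  shows "j' = j"
proof -
  have "c \<noteq> 0" using assms(3) by auto
  then have c: "c \<noteq> 0" "degree c = 0" using assms(3) is_unit_iff_degree by auto
  have same: "(c *s p)$i \<noteq> 0 \<longleftrightarrow> p$i \<noteq> 0" "degree ((c *s p)$i) = degree (p$i)" for i
    using c by (simp, cases "p$i = 0") (simp_all add: degree_mult_eq)
  obtain i where i: "p$i \<noteq> 0" "int (degree (p$i)) = wt m1 m2 i - j"
    using assms(1) by (rule line_subbundle_degree_attained)
  obtain i' where i': "(c *s p)$i' \<noteq> 0" "int (degree ((c *s p)$i')) = wt m1 m2 i' - j'"
    using assms(2) by (rule line_subbundle_degree_attained)
  have "int (degree (p$i)) \<le> wt m1 m2 i - j'"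
    using line_subbundle_degree_le[OF assms(2), of i] same i(1) c(1) by simp
  moreover have "int (degree ((c *s p)$i')) \<le> wt m1 m2 i' - j"
    using line_subbundle_degree_le[OF assms(1), of i'] same i'(1) c(1) by simp
  ultimately show ?thesis using i(2) i'(2) by linarith
qed

section \<open>Kernel lines of trace-free Higgs fields\<close>

(* Each row of A annihilates the primitive vector p, so it is a multiple of (-p\<^sub>2, p\<^sub>1);
   tracelessness forces the two multipliers to be proportional to p. *)
lemma trace_free_kernel_factor:
  fixes a b c d :: "'a::idom"
  assumes "a * p1 + b * p2 = 0" "c * p1 + d * p2 = 0" "a + d = 0" "u * p1 + v * p2 = 1"
  obtains r where "a = - r * p1 * p2" "b = r * p1 * p1" "c = - r * p2 * p2" "d = r * p2 * p1"
proof -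
  define s1 where "s1 = b * u - a * v"
  define s2 where "s2 = d * u - c * v"
  define r where "r = u * s1 + v * s2"
  have e1: "a = - s1 * p2" "b = s1 * p1" using assms(1,4) unfolding s1_def by algebra+
  have e2: "c = - s2 * p2" "d = s2 * p1" using assms(2,4) unfolding s2_def by algebra+
  have "s2 * p1 - s1 * p2 = 0" using assms(3) e1 e2 by simp
  then have "s1 = r * p1" "s2 = r * p2" using assms(4) unfolding r_def by algebra+
  with e1 e2 show thesis by (intro that[of r]) (simp_all add: mult_ac)
qed

lemma kernel_line_factor:
  assumes "kernel_line m1 m2 A j p" "A$1$1 + A$2$2 = 0"
  obtains r where "A$1$1 = - r * p$1 * p$2" "A$1$2 = r * p$1 * p$1"
    "A$2$1 = - r * p$2 * p$2" "A$2$2 = r * p$2 * p$1"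
proof -
  obtain u v where uv: "u * p$1 + v * p$2 = 1"
    using assms(1) line_subbundle_unimodular unfolding kernel_line_def unimodular_def by blast
  have "A$1$1 * p$1 + A$1$2 * p$2 = 0" "A$2$1 * p$1 + A$2$2 * p$2 = 0"
    using assms(1) by (simp_all add: kernel_line_def matrix_vector_mult_eq_0_iff_2)
  from trace_free_kernel_factor[OF this assms(2) uv] that show thesis by blast
qed

lemma kernel_factor_nonzero:
  fixes A :: higgs
  assumes "A \<noteq> 0" "A$1$1 = - r * p1 * p2" "A$1$2 = r * p1 * p1"
    "A$2$1 = - r * p2 * p2" "A$2$2 = r * p2 * p1"
  shows "r \<noteq> 0"
  using assms by (auto simp: vec_eq_iff forall_2)

lemma kernel_line_degree_lower_bound:
  assumes "is_higgs_section m1 m2 A" "kernel_line m1 m2 A j p" "A$1$1 + A$2$2 = 0" "A \<noteq> 0"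
  shows "m1 + m2 - 2 \<le> 2 * j"
proof -
  obtain r where r: "A$1$1 = - r * p$1 * p$2" "A$1$2 = r * p$1 * p$1"
    "A$2$1 = - r * p$2 * p$2" "A$2$2 = r * p$2 * p$1"
    using kernel_line_factor[OF assms(2,3)] by blast
  have "r \<noteq> 0" using kernel_factor_nonzero[OF assms(4) r] .
  obtain i where i: "p$i \<noteq> 0" "int (degree (p$i)) = wt m1 m2 i - j"
    using assms(2) line_subbundle_degree_attained unfolding kernel_line_def by blast
  have bound: "A$k$l = 0 \<or> int (degree (A$k$l)) \<le> wt m1 m2 k - wt m1 m2 l + 2" for k l
    using assms(1) is_higgs_section_def by blast
  show ?thesis
  proof (cases i rule: index_2_cases)
    case 1
    then show ?thesis using bound[of 1 2] r(2) i \<open>r \<noteq> 0\<close> by (simp add: degree_mult_eq)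
  next
    case 2
    then show ?thesis using bound[of 2 1] r(3) i \<open>r \<noteq> 0\<close> by (simp add: degree_mult_eq)
  qed
qed

lemma kernel_line_degree_upper_bound:
  assumes "kernel_line m1 m2 A j p" "p$i \<noteq> 0"
  shows "j \<le> wt m1 m2 i"
proof -
  have "int (degree (p$i)) \<le> wt m1 m2 i - j"
    using assms line_subbundle_degree_le unfolding kernel_line_def by blast
  then show ?thesis by linarith
qed

lemma unimodular_parallel_unit_multiple:
  fixes p q :: "'a::idom^2"
  assumes "unimodular p" "unimodular q" "p$1 * q$2 = p$2 * q$1"
  obtains c where "c dvd 1" "q = c *s p"
proof -
  obtain u v where uv: "u * p$1 + v * p$2 = 1" using assms(1) unimodular_def by blast
  obtain u' v' where uv': "u' * q$1 + v' * q$2 = 1" using assms(2) unimodular_def by blast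
  define c where "c = u * q$1 + v * q$2"
  define c' where "c' = u' * p$1 + v' * p$2"
  have q: "q$1 = c * p$1" "q$2 = c * p$2" unfolding c_def using assms(3) uv by algebra+
  have p: "p$1 = c' * q$1" "p$2 = c' * q$2" unfolding c'_def using assms(3) uv' by algebra+
  have "c * c' = (c * c') * (u * p$1 + v * p$2)" using uv by simp
  also have "\<dots> = u * p$1 + v * p$2" using p q by algebra
  finally have "c dvd 1" using uv by (metis dvdI)
  moreover have "q = c *s p" using q by (simp add: vec_eq_iff forall_2)
  ultimately show thesis by (rule that)
qed

lemma kernel_line_unique:
  assumes "kernel_line m1 m2 A j p" "kernel_line m1 m2 A j' q" "A$1$1 + A$2$2 = 0" "A \<noteq> 0"
  obtains c where "c dvd 1" "q = c *s p" "j' = j"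
proof -
  obtain r where r: "A$1$1 = - r * p$1 * p$2" "A$1$2 = r * p$1 * p$1"
    "A$2$1 = - r * p$2 * p$2" "A$2$2 = r * p$2 * p$1"
    using kernel_line_factor[OF assms(1,3)] by blast
  have "r \<noteq> 0" using kernel_factor_nonzero[OF assms(4) r] .
  have unim: "unimodular p" "unimodular q"
    using assms(1,2) line_subbundle_unimodular kernel_line_def by blast+
  have "A$1$1 * q$1 + A$1$2 * q$2 = 0" "A$2$1 * q$1 + A$2$2 * q$2 = 0"
    using assms(2) by (auto simp: kernel_line_def matrix_vector_mult_eq_0_iff_2)
  then have "r * p$i * (p$1 * q$2 - p$2 * q$1) = 0" for i
    using r by (cases i rule: index_2_cases) (simp_all add: algebra_simps)
  then have "p$1 * q$2 = p$2 * q$1"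
    using \<open>r \<noteq> 0\<close> unimodular_nonzero[OF unim(1)] by auto
  then obtain c where c: "c dvd 1" "q = c *s p"
    using unimodular_parallel_unit_multiple[OF unim] by blast
  then have "j' = j"
    using assms(1,2) line_subbundle_unit_multiple_degree kernel_line_def by blast
  with c show thesis by (rule that)
qed

lemma trace_free_det_zero_kernel_vector:
  fixes A :: higgs
  assumes "A$1$1 + A$2$2 = 0" "hdet A = 0"
  obtains p where "unimodular p" "A *v p = 0"
proof (cases "A$1$1 = 0 \<and> A$1$2 = 0")
  case True
  define p :: "complex poly^2" where "p = (\<chi> i. if i = 1 then 0 else 1)"
  have "unimodular p" unfolding unimodular_def by (intro exI[of _ 0] exI[of _ 1]) (simp add: p_def)
  moreover have "A *v p = 0" using True assms(1) by (simp add: matrix_vector_mult_eq_0_iff_2 p_def)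
  ultimately show thesis by (rule that)
next
  case False
  define g where "g = gcd (A$1$1) (A$1$2)"
  define a where "a = A$1$1 div g"
  define b where "b = A$1$2 div g"
  have "g \<noteq> 0" using False by (simp add: g_def)
  have ab: "A$1$1 = g * a" "A$1$2 = g * b" by (simp_all add: a_def b_def g_def)
  have "coprime a b" using False div_gcd_coprime unfolding a_def b_def g_def by blast
  then obtain u v where uv: "u * a + v * b = 1"
    by (metis bezout_coefficients_fst_snd coprime_iff_gcd_eq_1)
  define p :: "complex poly^2" where "p = (\<chi> i. if i = 1 then b else - a)"
  have "unimodular p" unfolding unimodular_def
    using uv by (intro exI[of _ v] exI[of _ "- u"]) (simp add: p_def algebra_simps)
  moreover have "A *v p = 0"
  proof -
    have A22: "A$2$2 = - (g * a)" using assms(1) ab(1) by (simp add: eq_neg_iff_add_eq_0 add.commute)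
    have "g * (A$2$1 * b + g * a * a) = - hdet A" unfolding hdet_def A22 ab by algebra
    with assms(2) \<open>g \<noteq> 0\<close> have "A$2$1 * b + g * a * a = 0" by simp
    then have "A$1$1 * b + A$1$2 * - a = 0" "A$2$1 * b + A$2$2 * - a = 0"
      unfolding A22 ab by (simp_all add: algebra_simps)
    then show ?thesis by (simp add: matrix_vector_mult_eq_0_iff_2 p_def)
  qed
  ultimately show thesis by (rule that)
qed

lemma kernel_line_exists:
  assumes "A$1$1 + A$2$2 = 0" "hdet A = 0"
  obtains j p where "kernel_line m1 m2 A j p"
proof -
  obtain p where p: "unimodular p" "A *v p = 0"
    using trace_free_det_zero_kernel_vector[OF assms] .
  obtain j where "line_subbundle m1 m2 j p" using unimodular_line_subbundle[OF p(1)] .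
  with p(2) show thesis using that unfolding kernel_line_def by blast
qed

section \<open>The loci Q, R and S\<close>

lemma QPH0_nonzero_kernel_line:
  assumes "x \<in> QPH0 m1 m2 z1" "z1 \<noteq> 0" "z1 \<noteq> 1" "snd x \<noteq> 0"
  obtains j p where "kernel_line m1 m2 (snd x) j p" "m1 + m2 - 2 \<le> 2 * j"
    "\<And>i. p$i \<noteq> 0 \<Longrightarrow> j \<le> wt m1 m2 i"
proof -
  note A = QPH0_higgs_field[OF assms(1-3)]
  obtain j p where kl: "kernel_line m1 m2 (snd x) j p" using kernel_line_exists[OF A(2,3)] .
  show thesis
  proof (rule that[OF kl])
    show "m1 + m2 - 2 \<le> 2 * j" by (rule kernel_line_degree_lower_bound[OF A(1) kl A(2) assms(4)])
    show "j \<le> wt m1 m2 i" if "p$i \<noteq> 0" for i by (rule kernel_line_degree_upper_bound[OF kl that])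
  qed
qed

lemma QPH0_subset_balanced:
  assumes "z1 \<noteq> 0" "z1 \<noteq> 1"
  shows "QPH0 m1 m1 z1 \<subseteq> Qloc m1 m1 z1 \<union> (\<Union>j \<in> {j. m1 + m1 - 2 \<le> 2 * j \<and> j \<le> m1}. Sloc m1 m1 z1 j)"
proof
  fix x assume x: "x \<in> QPH0 m1 m1 z1"
  show "x \<in> Qloc m1 m1 z1 \<union> (\<Union>j \<in> {j. m1 + m1 - 2 \<le> 2 * j \<and> j \<le> m1}. Sloc m1 m1 z1 j)"
  proof (cases "snd x = 0")
    case False
    obtain j p where kl: "kernel_line m1 m1 (snd x) j p" "m1 + m1 - 2 \<le> 2 * j"
      and upper: "\<And>i. p$i \<noteq> 0 \<Longrightarrow> j \<le> wt m1 m1 i"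
      using QPH0_nonzero_kernel_line[OF x assms False] by blast
    have "p$1 \<noteq> 0 \<or> p$2 \<noteq> 0"
      using kl(1) line_subbundle_unimodular unimodular_nonzero unfolding kernel_line_def by blast
    then have "j \<le> m1" using upper[of 1] upper[of 2] by auto
    moreover have "x \<in> Sloc m1 m1 z1 j" unfolding Sloc_def using x False kl(1) by blast
    ultimately show ?thesis using kl(2) by blast
  qed (simp add: x Qloc_def)
qed

lemma QPH0_subset_unbalanced:
  assumes "z1 \<noteq> 0" "z1 \<noteq> 1"
  shows "QPH0 m1 m2 z1 \<subseteq>
    Qloc m1 m2 z1 \<union> Rloc m1 m2 z1 \<union> (\<Union>j \<in> {j. m1 + m2 - 2 \<le> 2 * j \<and> j \<le> m2}. Sloc m1 m2 z1 j)"
proof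
  fix x assume x: "x \<in> QPH0 m1 m2 z1"
  show "x \<in> Qloc m1 m2 z1 \<union> Rloc m1 m2 z1 \<union> (\<Union>j \<in> {j. m1 + m2 - 2 \<le> 2 * j \<and> j \<le> m2}. Sloc m1 m2 z1 j)"
  proof (cases "snd x = 0")
    case False
    obtain j p where kl: "kernel_line m1 m2 (snd x) j p" "m1 + m2 - 2 \<le> 2 * j"
      and upper: "\<And>i. p$i \<noteq> 0 \<Longrightarrow> j \<le> wt m1 m2 i"
      using QPH0_nonzero_kernel_line[OF x assms False] by blast
    show ?thesis
    proof (cases "p$2 = 0")
      case True
      then have "x \<in> Rloc m1 m2 z1" unfolding Rloc_def using x False kl(1) by blast
      then show ?thesis by blast
    next
      case p2: False
      then have "x \<in> Sloc m1 m2 z1 j" unfolding Sloc_def using x False kl(1) by blast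
      moreover have "j \<le> m2" using upper[OF p2] by simp
      ultimately show ?thesis using kl(2) by blast
    qed
  qed (simp add: x Qloc_def)
qed

lemma Sloc_disjoint:
  assumes "z1 \<noteq> 0" "z1 \<noteq> 1" "j \<noteq> j'"
  shows "Sloc m1 m2 z1 j \<inter> Sloc m1 m2 z1 j' = {}"
proof -
  have False if "x \<in> QPH0 m1 m2 z1" "snd x \<noteq> 0"
    "kernel_line m1 m2 (snd x) j p" "kernel_line m1 m2 (snd x) j' q" for x p q
    using kernel_line_unique[OF that(3,4) QPH0_higgs_field(2)[OF that(1) assms(1,2)] that(2)] assms(3)
    by blast
  then show ?thesis unfolding Sloc_def by blast
qed

lemma Rloc_Sloc_disjoint:
  assumes "z1 \<noteq> 0" "z1 \<noteq> 1" "m1 > m2"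
  shows "Rloc m1 m2 z1 \<inter> Sloc m1 m2 z1 j = {}"
proof -
  have False if x: "x \<in> QPH0 m1 m2 z1" "snd x \<noteq> 0"
    and q: "kernel_line m1 m2 (snd x) j' q" "q$2 = 0"
    and p: "kernel_line m1 m2 (snd x) j p" "p$2 \<noteq> 0" for x j' q p
  proof -
    obtain c where "c dvd 1" "q = c *s p"
      using kernel_line_unique[OF p(1) q(1) QPH0_higgs_field(2)[OF x(1) assms(1,2)] x(2)] .
    then show False using p(2) q(2) by auto
  qed
  then show ?thesis using assms(3) unfolding Rloc_def Sloc_def by blast
qed

lemma loci_subset_QPH0:
  "Qloc m1 m2 z1 \<subseteq> QPH0 m1 m2 z1" "Rloc m1 m2 z1 \<subseteq> QPH0 m1 m2 z1"
  "Sloc m1 m2 z1 j \<subseteq> QPH0 m1 m2 z1"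
  by (auto simp: Qloc_def Rloc_def Sloc_def)

lemma Qloc_disjoint: "Qloc m1 m2 z1 \<inter> Rloc m1 m2 z1 = {}" "Qloc m1 m2 z1 \<inter> Sloc m1 m2 z1 j = {}"
  by (auto simp: Qloc_def Rloc_def Sloc_def)

lemma disj_union2I: "X \<subseteq> A \<union> B \<Longrightarrow> A \<union> B \<subseteq> X \<Longrightarrow> A \<inter> B = {} \<Longrightarrow> disj_union2 X A B"
  by (auto simp: disj_union2_def)

lemma disj_union3I:
  "X \<subseteq> A \<union> B \<union> C \<Longrightarrow> A \<union> B \<union> C \<subseteq> X \<Longrightarrow> A \<inter> B = {} \<Longrightarrow> A \<inter> C = {} \<Longrightarrow> B \<inter> C = {}
    \<Longrightarrow> disj_union3 X A B C"
  by (auto simp: disj_union3_def)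

theorem corollary4p4:
  fixes z1 :: complex and m1 m2 m :: int
  assumes "z1 \<noteq> 0" and "z1 \<noteq> 1" and "m1 \<ge> m2"
  shows "(m1 = m \<and> m2 = m \<longrightarrow>
            disj_union3 (QPH0 m1 m2 z1) (Qloc m1 m2 z1) (Sloc m1 m2 z1 m) (Sloc m1 m2 z1 (m - 1)))
       \<and> (m1 = m + 1 \<and> m2 = m \<longrightarrow>
            disj_union3 (QPH0 m1 m2 z1) (Qloc m1 m2 z1) (Rloc m1 m2 z1) (Sloc m1 m2 z1 m))
       \<and> (m1 = m + 1 \<and> m2 = m - 1 \<longrightarrow>
            disj_union3 (QPH0 m1 m2 z1) (Qloc m1 m2 z1) (Rloc m1 m2 z1) (Sloc m1 m2 z1 (m - 1)))
       \<and> (m1 - m2 \<ge> 3 \<longrightarrow> disj_union2 (QPH0 m1 m2 z1) (Qloc m1 m2 z1) (Rloc m1 m2 z1))"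
proof (intro conjI impI)
  assume m: "m1 = m \<and> m2 = m"
  have "{j. m + m - 2 \<le> 2 * j \<and> j \<le> m} = {m, m - 1}" by auto
  with QPH0_subset_balanced[OF assms(1,2), of m] m
  have "QPH0 m1 m2 z1 \<subseteq> Qloc m1 m2 z1 \<union> Sloc m1 m2 z1 m \<union> Sloc m1 m2 z1 (m - 1)"
    by (simp add: Un_assoc)
  then show "disj_union3 (QPH0 m1 m2 z1) (Qloc m1 m2 z1) (Sloc m1 m2 z1 m) (Sloc m1 m2 z1 (m - 1))"
    by (intro disj_union3I) (simp_all add: loci_subset_QPH0 Qloc_disjoint Sloc_disjoint[OF assms(1,2)])
next
  assume m: "m1 = m + 1 \<and> m2 = m"
  have "{j. m1 + m2 - 2 \<le> 2 * j \<and> j \<le> m2} = {m}" using m by auto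
  with QPH0_subset_unbalanced[OF assms(1,2), of m1 m2]
  have "QPH0 m1 m2 z1 \<subseteq> Qloc m1 m2 z1 \<union> Rloc m1 m2 z1 \<union> Sloc m1 m2 z1 m" by simp
  then show "disj_union3 (QPH0 m1 m2 z1) (Qloc m1 m2 z1) (Rloc m1 m2 z1) (Sloc m1 m2 z1 m)"
    using m by (intro disj_union3I) (simp_all add: loci_subset_QPH0 Qloc_disjoint Rloc_Sloc_disjoint[OF assms(1,2)])
next
  assume m: "m1 = m + 1 \<and> m2 = m - 1"
  have "{j. m1 + m2 - 2 \<le> 2 * j \<and> j \<le> m2} = {m - 1}" using m by auto
  with QPH0_subset_unbalanced[OF assms(1,2), of m1 m2]
  have "QPH0 m1 m2 z1 \<subseteq> Qloc m1 m2 z1 \<union> Rloc m1 m2 z1 \<union> Sloc m1 m2 z1 (m - 1)" by simp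
  then show "disj_union3 (QPH0 m1 m2 z1) (Qloc m1 m2 z1) (Rloc m1 m2 z1) (Sloc m1 m2 z1 (m - 1))"
    using m by (intro disj_union3I) (simp_all add: loci_subset_QPH0 Qloc_disjoint Rloc_Sloc_disjoint[OF assms(1,2)])
next
  assume "m1 - m2 \<ge> 3"
  then have "{j. m1 + m2 - 2 \<le> 2 * j \<and> j \<le> m2} = {}" by auto
  with QPH0_subset_unbalanced[OF assms(1,2), of m1 m2]
  have "QPH0 m1 m2 z1 \<subseteq> Qloc m1 m2 z1 \<union> Rloc m1 m2 z1" by simp
  then show "disj_union2 (QPH0 m1 m2 z1) (Qloc m1 m2 z1) (Rloc m1 m2 z1)"
    by (intro disj_union2I) (simp_all add: loci_subset_QPH0 Qloc_disjoint)
qed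

end
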